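(* Let $\alpha,\beta,\gamma\in\mathbb{C}$ and $k\in\mathbb{N}$, and consider the difference equation $$z_{n+1}=\frac{\alpha+\beta z_{n-k}}{\gamma-z_n},\qquad n=0,1,2,\ldots,$$ with complex initial conditions $z_{-k},\dots,z_{-1},z_0$. Let $s=\sqrt{(\beta-\gamma)^2-4\alpha}=\sqrt{-4\alpha+\beta^2-2\beta\gamma+\gamma^2}$ and let $\bar z_1=\frac{1}{2}\left(-s-\beta+\gamma\right)$, which is a fixed point of the equation. If $$\left|\frac{2\beta}{s+\beta+\gamma}\right|+\left|\frac{\gamma\left(-s-\beta+\gamma\right)-2\alpha}{2(\alpha+\beta\gamma)}\right|<1,$$ then $\bar z_1$ is locally asymptotically stable.
   Context: Here $\sqrt{\cdot}$ denotes a fixed complex square root, used consistently in all occurrences. A fixed point $\bar z$ of $z_{n+1}=f(z_n,\dots,z_{n-k})$ is a point with $\bar z=f(\bar z,\dots,\bar z)$. It is locally asymptotically stable if for every $\epsilon>0$ there is $\delta>0$ such that $|z_{-k}-\bar z|+\dots+|z_0-\bar z|<\delta$ implies $|z_n-\bar z|<\epsilon$ for all $n\ge -k$ (and solutions converge to $\bar z$), as determined via the linearization of the equation at $\bar z$. *)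

theory Defs
  imports Complex_Main
begin

text \<open>Solutions of z(n+1) = (alpha + beta * z(n-k)) / (gamma - z n), n = 0,1,2,...
  A solution is a sequence indexed by integers n >= -k; values at n < -k are irrelevant.\<close>
definition is_solution :: "complex \<Rightarrow> complex \<Rightarrow> complex \<Rightarrow> nat \<Rightarrow> (int \<Rightarrow> complex) \<Rightarrow> bool" where
  "is_solution \<alpha> \<beta> \<gamma> k z \<longleftrightarrow>
     (\<forall>n::int. n \<ge> 0 \<longrightarrow> z (n + 1) = (\<alpha> + \<beta> * z (n - int k)) / (\<gamma> - z n))"

definition is_fixed_point :: "complex \<Rightarrow> complex \<Rightarrow> complex \<Rightarrow> complex \<Rightarrow> bool" where
  "is_fixed_point \<alpha> \<beta> \<gamma> zb \<longleftrightarrow> zb = (\<alpha> + \<beta> * zb) / (\<gamma> - zb)"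

definition locally_asymptotically_stable ::
  "complex \<Rightarrow> complex \<Rightarrow> complex \<Rightarrow> nat \<Rightarrow> complex \<Rightarrow> bool" where
  "locally_asymptotically_stable \<alpha> \<beta> \<gamma> k zb \<longleftrightarrow>
     (\<forall>\<epsilon>>0. \<exists>\<delta>>0. \<forall>z. is_solution \<alpha> \<beta> \<gamma> k z \<and>
        (\<Sum>i\<in>{- int k..0}. cmod (z i - zb)) < \<delta> \<longrightarrow>
          (\<forall>n::int. n \<ge> - int k \<longrightarrow> cmod (z n - zb) < \<epsilon>) \<and>
          ((\<lambda>n::nat. z (int n)) \<longlonglongrightarrow> zb))"

end

theory Submission
  imports Defs
begin

text \<open>Writing \<open>c = \<gamma> - zb\<close>, the deviation \<open>w n = z n - zb\<close> from a fixed point obeys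
  \<open>w (n+1) = (\<beta> w (n-k) + zb w n) / (c - w n)\<close>. As long as the deviations stay small this is
  a contraction by the factor \<open>(|zb| + |\<beta>|) / |c| < 1\<close> (up to a small margin) acting on the
  maximum of two earlier deviations, so the deviations decay like \<open>q ^ (n div (k+1))\<close>.
  The hypothesis of the theorem is exactly \<open>|\<beta>/c| + |zb/c| < 1\<close>.\<close>

lemma delayed_contraction_bound:
  fixes x :: "nat \<Rightarrow> real" and k :: nat
  assumes q: "0 \<le> q" "q \<le> 1" and D: "0 \<le> D"
    and init: "\<And>m. m \<le> k \<Longrightarrow> x m \<le> D"
    and step: "\<And>m b. k \<le> m \<Longrightarrow> x m \<le> b \<Longrightarrow> x (m - k) \<le> b \<Longrightarrow> b \<le> D \<Longrightarrow> x (Suc m) \<le> q * b"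
  shows "x m \<le> D * q ^ (m div (k + 1))"
proof (induction m rule: less_induct)
  case (less m)
  show ?case
  proof (cases "m \<le> k")
    case True
    then show ?thesis using init by simp
  next
    case False
    then obtain m' where m': "m = Suc m'" "k \<le> m'" by (cases m) auto
    define p where "p = m div (k + 1)"
    have p_pos: "1 \<le> p" unfolding p_def using False
      by (metis One_nat_def Suc_eq_plus1 Suc_le_eq add_gr_0 div_greater_zero_iff not_less_eq_eq)
    have delayed_index: "(m' - k) div (k + 1) = p - 1" unfolding p_def using m' le_div_geq by force
    have previous_index: "p - 1 \<le> m' div (k + 1)" unfolding p_def using m' by (simp add: div_Suc)
    have "x (m' - k) \<le> D * q ^ (p - 1)"
      using less.IH[of "m' - k"] m' delayed_index by simp
    moreover have "x m' \<le> D * q ^ (p - 1)"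
      using less.IH[of m'] m' previous_index q D
      by (meson lessI mult_left_mono order_trans power_decreasing)
    moreover have "D * q ^ (p - 1) \<le> D"
      using q D by (simp add: mult_left_le power_le_one)
    ultimately have "x m \<le> q * (D * q ^ (p - 1))"
      using step m' by blast
    also have "\<dots> = D * q ^ p"
      using p_pos by (metis mult.left_commute power_eq_if not_one_le_zero)
    finally show ?thesis unfolding p_def .
  qed
qed

lemma LIMSEQ_power_div_zero:
  fixes q :: real and k :: nat
  assumes "0 \<le> q" "q < 1"
  shows "(\<lambda>m. D * q ^ (m div (k + 1))) \<longlonglongrightarrow> 0"
proof -
  have "filterlim (\<lambda>m::nat. m div (k + 1)) sequentially sequentially"
    unfolding filterlim_at_top eventually_sequentially
    by (metis div_le_mono div_mult_self1_is_m zero_less_Suc Suc_eq_plus1)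
  with LIMSEQ_realpow_zero[OF assms] have "(\<lambda>m. q ^ (m div (k + 1))) \<longlonglongrightarrow> 0"
    by (rule filterlim_compose)
  then show ?thesis by (rule tendsto_mult_right_zero)
qed

lemma perturbation_step_bound:
  fixes \<beta> zb c e0 e1 :: "'a :: real_normed_field"
  assumes "norm e0 \<le> \<eta>" "\<eta> < norm c" "norm e0 \<le> M" "norm e1 \<le> M"
  shows "norm ((\<beta> * e1 + zb * e0) / (c - e0)) \<le> (norm zb + norm \<beta>) / (norm c - \<eta>) * M"
proof -
  have denominator: "norm c - \<eta> \<le> norm (c - e0)"
    using assms(1) norm_triangle_ineq2[of c e0] by linarith
  have "norm (\<beta> * e1 + zb * e0) \<le> norm \<beta> * norm e1 + norm zb * norm e0"
    by (metis norm_mult norm_triangle_ineq)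
  also have "\<dots> \<le> (norm zb + norm \<beta>) * M"
    using assms by (simp add: distrib_right add_mono mult_left_mono add.commute)
  finally have numerator: "norm (\<beta> * e1 + zb * e0) \<le> (norm zb + norm \<beta>) * M" .
  have "0 \<le> M" using assms(4) norm_ge_zero order_trans by blast
  then have "norm (\<beta> * e1 + zb * e0) / norm (c - e0) \<le> (norm zb + norm \<beta>) * M / (norm c - \<eta>)"
    using numerator denominator assms(1,2) by (intro frac_le) auto
  then show ?thesis by (simp add: norm_divide)
qed

lemma solution_deviation_step:
  assumes "is_solution \<alpha> \<beta> \<gamma> k z" and fp: "\<alpha> + \<beta> * zb = zb * (\<gamma> - zb)"
    and "0 \<le> n" and nz: "z n \<noteq> \<gamma>"
  shows "z (n + 1) - zb = (\<beta> * (z (n - int k) - zb) + zb * (z n - zb)) / ((\<gamma> - zb) - (z n - zb))"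
proof -
  have "z (n + 1) = (\<alpha> + \<beta> * z (n - int k)) / (\<gamma> - z n)"
    using assms unfolding is_solution_def by blast
  moreover have "\<gamma> - z n \<noteq> 0" using nz by simp
  ultimately show ?thesis using fp by (simp add: field_simps)
qed

lemma locally_asymptotically_stable_if_norm_sum_less:
  fixes \<alpha> \<beta> \<gamma> zb :: complex
  assumes fp: "\<alpha> + \<beta> * zb = zb * (\<gamma> - zb)" and less: "cmod zb + cmod \<beta> < cmod (\<gamma> - zb)"
  shows "locally_asymptotically_stable \<alpha> \<beta> \<gamma> k zb"
  unfolding locally_asymptotically_stable_def
proof (intro allI impI)
  fix \<epsilon> :: real assume "\<epsilon> > 0"
  define c where "c = \<gamma> - zb"
  define A where "A = cmod zb + cmod \<beta>"
  define \<eta> where "\<eta> = (cmod c - A) / 2"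
  define q where "q = A / (cmod c - \<eta>)"
  have "0 \<le> A" "A < cmod c" using less unfolding A_def c_def by auto
  then have \<eta>: "0 < \<eta>" "\<eta> < cmod c" and q: "0 \<le> q" "q < 1"
    unfolding q_def \<eta>_def by (auto simp: divide_simps)
  show "\<exists>\<delta>>0. \<forall>z. is_solution \<alpha> \<beta> \<gamma> k z \<and> (\<Sum>i\<in>{- int k..0}. cmod (z i - zb)) < \<delta> \<longrightarrow>
          (\<forall>n\<ge>- int k. cmod (z n - zb) < \<epsilon>) \<and> (\<lambda>n. z (int n)) \<longlonglongrightarrow> zb"
  proof (intro exI[of _ "min \<epsilon> \<eta>"] conjI allI impI)
    show "min \<epsilon> \<eta> > 0" using \<open>\<epsilon> > 0\<close> \<eta> by auto
    fix z assume z: "is_solution \<alpha> \<beta> \<gamma> k z \<and> (\<Sum>i\<in>{- int k..0}. cmod (z i - zb)) < min \<epsilon> \<eta>"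
    define D where "D = (\<Sum>i\<in>{- int k..0}. cmod (z i - zb))"
    have D: "0 \<le> D" "D < \<epsilon>" "D < \<eta>" using z unfolding D_def by (auto simp: sum_nonneg)
    define w where "w m = z (int m - int k) - zb" for m :: nat
    have decay: "cmod (w m) \<le> D * q ^ (m div (k + 1))" for m
    proof (rule delayed_contraction_bound[where x = "\<lambda>m. cmod (w m)"])
      show "cmod (w m) \<le> D" if "m \<le> k" for m
        unfolding w_def D_def using that by (intro member_le_sum) auto
      show "cmod (w (Suc m)) \<le> q * b"
        if "k \<le> m" "cmod (w m) \<le> b" "cmod (w (m - k)) \<le> b" "b \<le> D" for m b
      proof -
        have small: "cmod (w m) \<le> \<eta>" using that D by linarith
        then have "z (int m - int k) \<noteq> \<gamma>" using \<eta> unfolding w_def c_def by auto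
        then have "w (Suc m) = (\<beta> * w (m - k) + zb * w m) / (c - w m)"
          using solution_deviation_step[OF conjunct1[OF z] fp, of "int m - int k"] that(1)
          unfolding w_def c_def by (simp add: algebra_simps)
        also have "cmod \<dots> \<le> q * b"
          unfolding q_def A_def using small \<eta> that(2,3) by (intro perturbation_step_bound) auto
        finally show ?thesis .
      qed
    qed (use q D in auto)
    have bounded: "cmod (w m) \<le> D" for m
      using decay[of m] q D by (smt (verit) mult_left_le power_le_one)
    show "cmod (z n - zb) < \<epsilon>" if "- int k \<le> n" for n
      using bounded[of "nat (n + int k)"] that D unfolding w_def by simp
    have "\<forall>\<^sub>F m in sequentially. norm (w m) \<le> norm (D * q ^ (m div (k + 1))) * 1"
      using decay D(1) q(1) by (simp add: always_eventually)
    then have "w \<longlonglongrightarrow> 0"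
      by (rule tendsto_0_le[OF LIMSEQ_power_div_zero[OF q, of D k]])
    then have "(\<lambda>n. w (n + k)) \<longlonglongrightarrow> 0"
      by (rule LIMSEQ_ignore_initial_segment)
    then have "(\<lambda>n. w (n + k) + zb) \<longlonglongrightarrow> 0 + zb"
      by (intro tendsto_add tendsto_const)
    then show "(\<lambda>n. z (int n)) \<longlonglongrightarrow> zb" unfolding w_def by simp
  qed
qed

lemma fixed_point_of_root:
  fixes \<alpha> \<beta> \<gamma> s :: complex
  assumes "s\<^sup>2 = (\<beta> - \<gamma>)\<^sup>2 - 4 * \<alpha>"
  shows "\<alpha> + \<beta> * ((- s - \<beta> + \<gamma>) / 2) = (- s - \<beta> + \<gamma>) / 2 * (\<gamma> - (- s - \<beta> + \<gamma>) / 2)"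
  using assms by (simp add: field_simps power2_eq_square) algebra

lemma fixed_point_ratio:
  fixes \<alpha> \<beta> \<gamma> zb :: "'a :: field"
  assumes "\<alpha> + \<beta> * zb = zb * (\<gamma> - zb)" "\<alpha> + \<beta> * \<gamma> \<noteq> 0" "\<gamma> - zb \<noteq> 0"
  shows "(\<gamma> * zb - \<alpha>) / (\<alpha> + \<beta> * \<gamma>) = zb / (\<gamma> - zb)"
proof -
  have "(\<gamma> * zb - \<alpha>) * (\<gamma> - zb) = zb * (\<alpha> + \<beta> * \<gamma>)"
    using assms(1) by (simp add: algebra_simps) algebra
  then show ?thesis unfolding frac_eq_eq[OF assms(2,3)] .
qed

theorem theorem2p1:
  fixes \<alpha> \<beta> \<gamma> s :: complex and k :: nat
  assumes s_def: "s\<^sup>2 = (\<beta> - \<gamma>)\<^sup>2 - 4 * \<alpha>"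
    and nz1: "s + \<beta> + \<gamma> \<noteq> 0"
    and nz2: "\<alpha> + \<beta> * \<gamma> \<noteq> 0"
    and cond: "cmod (2 * \<beta> / (s + \<beta> + \<gamma>))
             + cmod ((\<gamma> * (- s - \<beta> + \<gamma>) - 2 * \<alpha>) / (2 * (\<alpha> + \<beta> * \<gamma>))) < 1"
  shows "locally_asymptotically_stable \<alpha> \<beta> \<gamma> k ((- s - \<beta> + \<gamma>) / 2)"
proof -
  define zb where "zb = (- s - \<beta> + \<gamma>) / 2"
  define c where "c = \<gamma> - zb"
  have fp: "\<alpha> + \<beta> * zb = zb * c"
    using fixed_point_of_root[OF s_def] unfolding zb_def c_def .
  have c: "c = (s + \<beta> + \<gamma>) / 2" "c \<noteq> 0"
    using nz1 unfolding c_def zb_def by (auto simp: field_simps)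
  have "2 * \<beta> / (s + \<beta> + \<gamma>) = \<beta> / c"
    using nz1 unfolding c(1) by (simp add: field_simps)
  moreover have "(\<gamma> * (- s - \<beta> + \<gamma>) - 2 * \<alpha>) / (2 * (\<alpha> + \<beta> * \<gamma>)) = zb / c"
  proof -
    have numerator: "\<gamma> * (- s - \<beta> + \<gamma>) - 2 * \<alpha> = 2 * (\<gamma> * zb - \<alpha>)"
      unfolding zb_def by simp
    show ?thesis
      using fixed_point_ratio[OF fp[unfolded c_def] nz2 c(2)[unfolded c_def]]
      unfolding numerator c_def by (subst mult_divide_mult_cancel_left) auto
  qed
  ultimately have "cmod \<beta> / cmod c + cmod zb / cmod c < 1"
    using cond by (simp add: norm_divide)
  then have "cmod zb + cmod \<beta> < cmod c"
    using c(2) by (simp add: field_simps)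
  then show ?thesis
    using locally_asymptotically_stable_if_norm_sum_less fp unfolding zb_def c_def by blast
qed

end
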